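(* Let $n\ge 1$, $d\ge 0$, and let $p\in\mathcal H(n,d)$ be a generalized Whitney mapping. Then $N(p)\ge d(n-1)+1$.
   Context: Write $s(x)=\sum_{j=1}^n x_j$. $\mathcal J(n)$ is the set of real polynomials $p\in\mathbb R[x_1,\dots,x_n]$ with $p=1$ on the hyperplane $\{s=1\}$; $\mathcal P(n)$ is the set of real polynomials with all coefficients nonnegative; $\mathcal H(n)=\mathcal J(n)\cap\mathcal P(n)$, and $\mathcal H(n,d)$ is the set of elements of $\mathcal H(n)$ of total degree exactly $d$. $N(p)$ is the number of distinct monomials occurring (with nonzero coefficient) in $p$. For polynomials $g,u$ put $X_u(g)=g-u+s u$. An element $p\in\mathcal H(n,d)$ is a generalized Whitney mapping if there exist $g_0,\dots,g_d\in\mathcal H(n)$ with $g_0=1$, $g_d=p$, $\deg g_j=j$ for each $j$, and for each $j>0$, $g_j=X_{u_j}(g_{j-1})$ for some polynomial $u_j$ such that both $u_j$ and $g_{j-1}-u_j$ have nonnegative coefficients. *)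

theory Defs
  imports Complex_Main "HOL-Library.Poly_Mapping"
begin

text \<open>Real polynomials in the variables x_0, x_1, ...: finitely supported maps from
  monomials (exponent vectors, finitely supported nat => nat) to real coefficients.\<close>

type_synonym mpoly = "(nat \<Rightarrow>\<^sub>0 nat) \<Rightarrow>\<^sub>0 real"

definition var :: "nat \<Rightarrow> mpoly" where
  "var j = Poly_Mapping.single (Poly_Mapping.single j 1) 1"

text \<open>s(x) = x_1 + ... + x_n (indexed 0..n-1).\<close>
definition s_poly :: "nat \<Rightarrow> mpoly" where
  "s_poly n = (\<Sum>j<n. var j)"

definition in_vars :: "nat \<Rightarrow> mpoly \<Rightarrow> bool" where
  "in_vars n p \<longleftrightarrow> (\<forall>m \<in> Poly_Mapping.keys p. Poly_Mapping.keys m \<subseteq> {..<n})"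

definition eval_mono :: "(nat \<Rightarrow>\<^sub>0 nat) \<Rightarrow> (nat \<Rightarrow> real) \<Rightarrow> real" where
  "eval_mono m x = (\<Prod>j\<in>Poly_Mapping.keys m. x j ^ Poly_Mapping.lookup m j)"

definition eval :: "mpoly \<Rightarrow> (nat \<Rightarrow> real) \<Rightarrow> real" where
  "eval p x = (\<Sum>m\<in>Poly_Mapping.keys p. Poly_Mapping.lookup p m * eval_mono m x)"

text \<open>Total degree of a monomial and of a polynomial (degree of 0 is taken to be 0).\<close>
definition mdeg :: "(nat \<Rightarrow>\<^sub>0 nat) \<Rightarrow> nat" where
  "mdeg m = (\<Sum>j\<in>Poly_Mapping.keys m. Poly_Mapping.lookup m j)"

definition tdeg :: "mpoly \<Rightarrow> nat" where
  "tdeg p = Max (insert 0 (mdeg ` Poly_Mapping.keys p))"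

definition Nmon :: "mpoly \<Rightarrow> nat" where
  "Nmon p = card (Poly_Mapping.keys p)"

definition nonneg_coeffs :: "mpoly \<Rightarrow> bool" where
  "nonneg_coeffs p \<longleftrightarrow> (\<forall>m. Poly_Mapping.lookup p m \<ge> 0)"

definition Jset :: "nat \<Rightarrow> mpoly set" where
  "Jset n = {p. in_vars n p \<and> (\<forall>x. (\<Sum>j<n. x j) = 1 \<longrightarrow> eval p x = 1)}"

definition Hset :: "nat \<Rightarrow> mpoly set" where
  "Hset n = {p \<in> Jset n. nonneg_coeffs p}"

definition Hsetd :: "nat \<Rightarrow> nat \<Rightarrow> mpoly set" where
  "Hsetd n d = {p \<in> Hset n. tdeg p = d}"

definition Xop :: "nat \<Rightarrow> mpoly \<Rightarrow> mpoly \<Rightarrow> mpoly" where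
  "Xop n u g = g - u + s_poly n * u"

definition gen_whitney :: "nat \<Rightarrow> nat \<Rightarrow> mpoly \<Rightarrow> bool" where
  "gen_whitney n d p \<longleftrightarrow> p \<in> Hsetd n d \<and>
     (\<exists>g :: nat \<Rightarrow> mpoly. g 0 = 1 \<and> g d = p \<and>
        (\<forall>j\<le>d. g j \<in> Hset n \<and> tdeg (g j) = j) \<and>
        (\<forall>j. 0 < j \<and> j \<le> d \<longrightarrow>
           (\<exists>u. g j = Xop n u (g (j - 1)) \<and> nonneg_coeffs u \<and> nonneg_coeffs (g (j - 1) - u))))"

end

theory Submission
  imports Defs
begin

text \<open>Unwinding the chain g_0 = 1, ..., g_d = p gives p = 1 + (s - 1) U with U = u_1 + ... + u_d
  having nonnegative coefficients, and since every step raises the degree by one, the support K of U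
  contains a monomial of each degree k < d. No cancellation occurs in s U, so every monomial of the
  boundary (x_0 K \<union> ... \<union> x_(n-1) K) - K occurs in p. Multiplying a nonempty set T of monomials by
  the variables yields at least |T| + n - 1 monomials (x_0 T together with x_i t, i > 0, for a t \<in> T of
  least x_0-degree); summing over the degree layers of K and discarding a monomial of least degree
  of K, which is not such a product, bounds the boundary from below by d(n - 1) + 1.\<close>

text \<open>Written with Suc 0, the simp normal form of 1 :: nat, so that simp rules about var_exp keep
  matching after simplification.\<close>

abbreviation var_exp :: "nat \<Rightarrow> (nat \<Rightarrow>\<^sub>0 nat)" where
  "var_exp i \<equiv> Poly_Mapping.single i (Suc 0)"

definition shift :: "nat \<Rightarrow> (nat \<Rightarrow>\<^sub>0 nat) set \<Rightarrow> (nat \<Rightarrow>\<^sub>0 nat) set" where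
  "shift n K = {var_exp i + m | i m. i < n \<and> m \<in> K}"

definition boundary :: "nat \<Rightarrow> (nat \<Rightarrow>\<^sub>0 nat) set \<Rightarrow> (nat \<Rightarrow>\<^sub>0 nat) set" where
  "boundary n K = shift n K - K"

lemma mdeg_eq_sum: "finite S \<Longrightarrow> Poly_Mapping.keys m \<subseteq> S \<Longrightarrow> mdeg m = (\<Sum>j\<in>S. Poly_Mapping.lookup m j)"
  unfolding mdeg_def by (rule sum.mono_neutral_left) (auto simp: in_keys_iff)

lemma mdeg_add: "mdeg (a + b) = mdeg a + mdeg b"
proof -
  let ?S = "Poly_Mapping.keys a \<union> Poly_Mapping.keys b"
  have "Poly_Mapping.keys (a + b) \<subseteq> ?S" by (simp add: keys_add)
  then show ?thesis
    by (simp add: mdeg_eq_sum[of ?S] lookup_add sum.distrib)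
qed

lemma mdeg_var_exp_add [simp]: "mdeg (var_exp i + m) = Suc (mdeg m)"
  unfolding mdeg_add by (simp add: mdeg_def)

lemma var_exp_eq_iff [simp]: "var_exp i = var_exp j \<longleftrightarrow> i = j"
  by (metis lookup_single_eq lookup_single_not_eq nat.distinct(1))

lemma finite_shift:
  assumes "finite K"
  shows "finite (shift n K)"
proof -
  have "shift n K = (\<lambda>(i, m). var_exp i + m) ` ({..<n} \<times> K)"
    by (auto simp: shift_def)
  then show ?thesis
    using assms by simp
qed

lemma shiftI: "i < n \<Longrightarrow> m \<in> K \<Longrightarrow> var_exp i + m \<in> shift n K"
  by (auto simp: shift_def)

lemma shift_UN: "shift n (\<Union>k\<in>D. T k) = (\<Union>k\<in>D. shift n (T k))"
  by (auto simp: shift_def)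

lemma mdeg_in_shift: "x \<in> shift n K \<Longrightarrow> \<exists>m\<in>K. mdeg x = Suc (mdeg m)"
  by (auto simp: shift_def)

lemma card_shift_ge:
  assumes T: "finite T" "T \<noteq> {}" and n: "n \<ge> 1"
  shows "card T + (n - 1) \<le> card (shift n T)"
proof -
  obtain t where t: "t \<in> T" "\<And>m. m \<in> T \<Longrightarrow> Poly_Mapping.lookup t 0 \<le> Poly_Mapping.lookup m 0"
    using T(2) ex_has_least_nat[of "\<lambda>m. m \<in> T" _ "\<lambda>m. Poly_Mapping.lookup m 0"] by blast
  define A where "A = (\<lambda>m. var_exp 0 + m) ` T"
  define B where "B = (\<lambda>i. var_exp i + t) ` {1..<n}"
  have card_A: "card A = card T"
    unfolding A_def by (rule card_image) (auto simp: inj_on_def)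
  have card_B: "card B = n - 1"
    unfolding B_def by (subst card_image) (auto simp: inj_on_def dest: add_right_imp_eq)
  have "A \<inter> B = {}"
  proof -
    have "Poly_Mapping.lookup x 0 < Poly_Mapping.lookup y 0" if "x \<in> B" "y \<in> A" for x y
      using that t(2) by (force simp: A_def B_def lookup_add lookup_single_not_eq less_Suc_eq_le)
    then show ?thesis by fastforce
  qed
  then have "card (A \<union> B) = card T + (n - 1)"
    using T(1) card_A card_B by (simp add: card_Un_disjoint A_def B_def)
  moreover have "A \<union> B \<subseteq> shift n T"
    using n t(1) by (auto simp: A_def B_def intro: shiftI)
  ultimately show ?thesis
    using card_mono[OF finite_shift[OF T(1)]] by metis
qed

lemma card_shift_ge_by_degrees:
  assumes K: "finite K" and n: "n \<ge> 1"
  shows "card K + card (mdeg ` K) * (n - 1) \<le> card (shift n K)"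
proof -
  define layer where "layer k = {m \<in> K. mdeg m = k}" for k
  have fin: "finite (layer k)" for k
    using K by (simp add: layer_def)
  have K_UN: "(\<Union>k\<in>mdeg ` K. layer k) = K"
    by (auto simp: layer_def)
  have "card (\<Union>k\<in>mdeg ` K. layer k) = (\<Sum>k\<in>mdeg ` K. card (layer k))"
    using K fin by (intro card_UN_disjoint) (auto simp: layer_def)
  then have "card K + card (mdeg ` K) * (n - 1) = (\<Sum>k\<in>mdeg ` K. card (layer k) + (n - 1))"
    by (simp only: K_UN sum.distrib sum_constant) simp
  also have "\<dots> \<le> (\<Sum>k\<in>mdeg ` K. card (shift n (layer k)))"
    using fin n by (intro sum_mono card_shift_ge) (auto simp: layer_def)
  also have "\<dots> = card (\<Union>k\<in>mdeg ` K. shift n (layer k))"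
  proof (rule card_UN_disjoint[symmetric])
    show "\<forall>k\<in>mdeg ` K. \<forall>l\<in>mdeg ` K. k \<noteq> l \<longrightarrow> shift n (layer k) \<inter> shift n (layer l) = {}"
      by (fastforce simp: layer_def dest: mdeg_in_shift)
  qed (use K fin finite_shift in auto)
  also have "\<dots> = card (shift n K)"
    by (simp only: shift_UN[symmetric] K_UN)
  finally show ?thesis .
qed

lemma card_boundary_ge:
  assumes K: "finite K" "K \<noteq> {}" and n: "n \<ge> 1"
  shows "card (mdeg ` K) * (n - 1) + 1 \<le> card (boundary n K)"
proof -
  obtain m0 where m0: "m0 \<in> K" "\<And>m. m \<in> K \<Longrightarrow> mdeg m0 \<le> mdeg m"
    using K(2) ex_has_least_nat[of "\<lambda>m. m \<in> K" _ mdeg] by blast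
  have "m0 \<notin> shift n K"
    using m0 by (fastforce dest: mdeg_in_shift)
  then have "card (shift n K \<inter> K) \<le> card (K - {m0})"
    using K(1) by (intro card_mono) auto
  moreover have "0 < card K"
    using K by (simp add: card_gt_0_iff)
  ultimately have overlap: "card (shift n K \<inter> K) + 1 \<le> card K"
    using K(1) m0(1) by (simp add: card_Diff_singleton)
  have "card (shift n K \<inter> K) \<le> card (shift n K)"
    using K(1) finite_shift by (intro card_mono) auto
  then have "card (boundary n K) + card (shift n K \<inter> K) = card (shift n K)"
    using K(1) by (simp add: boundary_def card_Diff_subset_Int)
  then show ?thesis
    using overlap card_shift_ge_by_degrees[OF K(1) n] by linarith
qed

lemma lookup_var_mult: "Poly_Mapping.lookup (var i * g) (var_exp i + q) = Poly_Mapping.lookup g q"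
  by (simp add: var_def lookup_mult lookup_single when_mult Sum_any.delta)

lemma nonneg_coeffs_var: "nonneg_coeffs (var i)"
  by (simp add: nonneg_coeffs_def var_def lookup_single when_def)

lemma nonneg_coeffs_sum: "(\<And>j. j \<in> J \<Longrightarrow> nonneg_coeffs (u j)) \<Longrightarrow> nonneg_coeffs (sum u J)"
  by (simp add: nonneg_coeffs_def lookup_sum sum_nonneg)

lemma nonneg_coeffs_mult:
  assumes "nonneg_coeffs f" "nonneg_coeffs g"
  shows "nonneg_coeffs (f * g)"
  using assms unfolding nonneg_coeffs_def lookup_mult Sum_any.expand_set
  by (simp add: sum_nonneg when_def)

lemma keys_subset_if_nonneg_diff:
  assumes "nonneg_coeffs u" "nonneg_coeffs (g - u)"
  shows "Poly_Mapping.keys u \<subseteq> Poly_Mapping.keys g"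
proof
  fix m assume "m \<in> Poly_Mapping.keys u"
  then have "Poly_Mapping.lookup u m > 0"
    using assms(1) by (simp add: nonneg_coeffs_def in_keys_iff order_less_le)
  moreover have "Poly_Mapping.lookup u m \<le> Poly_Mapping.lookup g m"
    using assms(2) by (simp add: nonneg_coeffs_def lookup_minus)
  ultimately show "m \<in> Poly_Mapping.keys g"
    by (simp add: in_keys_iff)
qed

lemma keys_s_poly_mult:
  assumes U: "nonneg_coeffs U"
  shows "Poly_Mapping.keys (s_poly n * U) = shift n (Poly_Mapping.keys U)"
proof
  have s_U: "s_poly n * U = (\<Sum>i<n. var i * U)"
    by (simp add: s_poly_def sum_distrib_right)
  show "Poly_Mapping.keys (s_poly n * U) \<subseteq> shift n (Poly_Mapping.keys U)"
  proof
    fix x assume "x \<in> Poly_Mapping.keys (s_poly n * U)"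
    then have "x \<in> (\<Union>i\<in>{..<n}. Poly_Mapping.keys (var i * U))"
      unfolding s_U by (rule subsetD[OF keys_sum])
    then obtain i where i: "i < n" "x \<in> Poly_Mapping.keys (var i * U)"
      by blast
    then have "x \<in> {a + b |a b. a \<in> Poly_Mapping.keys (var i) \<and> b \<in> Poly_Mapping.keys U}"
      using keys_mult by blast
    then obtain q where "q \<in> Poly_Mapping.keys U" "x = var_exp i + q"
      by (auto simp: var_def)
    then show "x \<in> shift n (Poly_Mapping.keys U)"
      using i(1) by (simp add: shiftI)
  qed
  show "shift n (Poly_Mapping.keys U) \<subseteq> Poly_Mapping.keys (s_poly n * U)"
  proof
    fix x assume "x \<in> shift n (Poly_Mapping.keys U)"
    then obtain i q where iq: "i < n" "q \<in> Poly_Mapping.keys U" "x = var_exp i + q"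
      by (auto simp: shift_def)
    have "0 < Poly_Mapping.lookup (var i * U) x"
      using iq U by (simp add: lookup_var_mult nonneg_coeffs_def in_keys_iff order_less_le)
    also have "\<dots> \<le> (\<Sum>i'<n. Poly_Mapping.lookup (var i' * U) x)"
    proof (rule member_le_sum)
      show "0 \<le> Poly_Mapping.lookup (var i' * U) x" for i'
        using nonneg_coeffs_mult[OF nonneg_coeffs_var U] by (simp add: nonneg_coeffs_def)
    qed (use iq(1) in simp_all)
    also have "\<dots> = Poly_Mapping.lookup (s_poly n * U) x"
      by (simp add: s_U lookup_sum)
    finally show "x \<in> Poly_Mapping.keys (s_poly n * U)"
      by (simp add: in_keys_iff)
  qed
qed

lemma boundary_subset_keys:
  assumes q: "nonneg_coeffs q" and U: "nonneg_coeffs U"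
  shows "boundary n (Poly_Mapping.keys U) \<subseteq> Poly_Mapping.keys (q + (s_poly n - 1) * U)"
proof
  fix x assume x: "x \<in> boundary n (Poly_Mapping.keys U)"
  then have "Poly_Mapping.lookup U x = 0"
    by (simp add: boundary_def in_keys_iff)
  moreover have "0 < Poly_Mapping.lookup (s_poly n * U) x"
  proof -
    have "nonneg_coeffs (s_poly n * U)"
      unfolding s_poly_def using nonneg_coeffs_var U
      by (intro nonneg_coeffs_mult nonneg_coeffs_sum)
    moreover have "x \<in> Poly_Mapping.keys (s_poly n * U)"
      using x by (simp add: keys_s_poly_mult[OF U] boundary_def)
    ultimately show ?thesis
      by (simp add: nonneg_coeffs_def in_keys_iff order_less_le)
  qed
  moreover have "0 \<le> Poly_Mapping.lookup q x"
    using q by (simp add: nonneg_coeffs_def)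
  ultimately show "x \<in> Poly_Mapping.keys (q + (s_poly n - 1) * U)"
    by (simp add: algebra_simps lookup_add lookup_minus in_keys_iff)
qed

lemma mdeg_le_tdeg: "m \<in> Poly_Mapping.keys p \<Longrightarrow> mdeg m \<le> tdeg p"
  unfolding tdeg_def by (intro Max_ge) auto

lemma ex_mdeg_eq_tdeg:
  assumes "0 < tdeg p"
  shows "\<exists>m\<in>Poly_Mapping.keys p. mdeg m = tdeg p"
proof -
  have "tdeg p \<in> insert 0 (mdeg ` Poly_Mapping.keys p)"
    unfolding tdeg_def by (intro Max_in) auto
  then show ?thesis
    using assms by auto
qed

lemma Xop_eq: "Xop n u g = g + (s_poly n - 1) * u"
  by (simp add: Xop_def algebra_simps)

lemma Xop_degree_step_monomial:
  assumes u: "nonneg_coeffs u" "nonneg_coeffs (g - u)"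
    and deg: "tdeg g \<le> k" "tdeg (Xop n u g) = Suc k"
  shows "\<exists>q\<in>Poly_Mapping.keys u. mdeg q = k"
proof -
  obtain m where m: "m \<in> Poly_Mapping.keys (Xop n u g)" "mdeg m = Suc k"
    using ex_mdeg_eq_tdeg[of "Xop n u g"] deg(2) by auto
  have "m \<notin> Poly_Mapping.keys g"
    using mdeg_le_tdeg deg(1) m(2) by fastforce
  moreover from this have "m \<notin> Poly_Mapping.keys u"
    using keys_subset_if_nonneg_diff[OF u] by blast
  ultimately have "m \<in> Poly_Mapping.keys (s_poly n * u)"
    using m(1) by (simp add: Xop_def in_keys_iff lookup_add lookup_minus)
  then obtain i q where "q \<in> Poly_Mapping.keys u" "m = var_exp i + q"
    by (auto simp: keys_s_poly_mult[OF u(1)] shift_def)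
  then show ?thesis
    using m(2) by auto
qed

lemma gen_whitney_decomposition:
  assumes "gen_whitney n d p"
  obtains U where "nonneg_coeffs U" "p = 1 + (s_poly n - 1) * U"
    "{..<d} \<subseteq> mdeg ` Poly_Mapping.keys U"
proof -
  obtain g u where g0: "g 0 = 1" and gd: "g d = p" and deg: "\<And>j. j \<le> d \<Longrightarrow> tdeg (g j) = j"
    and step: "\<And>j. 0 < j \<Longrightarrow> j \<le> d \<Longrightarrow> g j = Xop n (u j) (g (j - 1)) \<and>
      nonneg_coeffs (u j) \<and> nonneg_coeffs (g (j - 1) - u j)"
    using assms unfolding gen_whitney_def by metis
  define U where "U = (\<Sum>j\<in>{1..d}. u j)"
  have partial_sums: "g k = 1 + (s_poly n - 1) * (\<Sum>j\<in>{1..k}. u j)" if "k \<le> d" for k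
    using that
  proof (induction k)
    case (Suc k)
    have "g (Suc k) = g k + (s_poly n - 1) * u (Suc k)"
      using step[of "Suc k"] Suc.prems by (simp add: Xop_eq)
    then show ?case
      using Suc by (simp add: distrib_left add.assoc)
  qed (simp add: g0)
  have nonneg_u: "nonneg_coeffs (u j)" if "j \<in> {1..d}" for j
    using that step by auto
  have nonneg_U: "nonneg_coeffs U"
    unfolding U_def by (rule nonneg_coeffs_sum) (rule nonneg_u)
  have keys_u: "Poly_Mapping.keys (u j) \<subseteq> Poly_Mapping.keys U" if j: "j \<in> {1..d}" for j
  proof (rule keys_subset_if_nonneg_diff[OF nonneg_u[OF j]])
    have "U - u j = (\<Sum>i\<in>{1..d} - {j}. u i)"
      using j by (simp add: U_def sum_diff1)
    then show "nonneg_coeffs (U - u j)"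
      using nonneg_u nonneg_coeffs_sum[of "{1..d} - {j}" u] by simp
  qed
  have "{..<d} \<subseteq> mdeg ` Poly_Mapping.keys U"
  proof
    fix k assume "k \<in> {..<d}"
    then have "\<exists>q\<in>Poly_Mapping.keys (u (Suc k)). mdeg q = k"
      using step[of "Suc k"] deg[of k] deg[of "Suc k"]
      by (intro Xop_degree_step_monomial[of _ "g k" _ n]) auto
    then show "k \<in> mdeg ` Poly_Mapping.keys U"
      using keys_u[of "Suc k"] \<open>k \<in> {..<d}\<close> by fastforce
  qed
  then show thesis
    using that nonneg_U partial_sums[of d] gd by (simp add: U_def)
qed

theorem lemma2:
  fixes n d :: nat and p :: mpoly
  assumes "n \<ge> 1"
    and "gen_whitney n d p"
  shows "Nmon p \<ge> d * (n - 1) + 1"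
proof (cases "d = 0")
  case True
  obtain g where "g 0 = 1" "g d = p"
    using assms(2) unfolding gen_whitney_def by blast
  then have "p = 1"
    using True by simp
  then show ?thesis
    using True by (simp add: Nmon_def)
next
  case False
  obtain U where U: "nonneg_coeffs U" "p = 1 + (s_poly n - 1) * U"
    and degrees: "{..<d} \<subseteq> mdeg ` Poly_Mapping.keys U"
    using gen_whitney_decomposition[OF assms(2)] by blast
  have nonempty: "Poly_Mapping.keys U \<noteq> {}"
    using degrees False by auto
  have "d * (n - 1) + 1 \<le> card (mdeg ` Poly_Mapping.keys U) * (n - 1) + 1"
    using card_mono[OF _ degrees] by simp
  also have "\<dots> \<le> card (boundary n (Poly_Mapping.keys U))"
    by (rule card_boundary_ge[OF finite_keys nonempty assms(1)])
  also have "\<dots> \<le> Nmon p"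
  proof -
    have "nonneg_coeffs (1 :: mpoly)"
      by (simp add: nonneg_coeffs_def lookup_one when_def)
    then show ?thesis
      unfolding Nmon_def U(2) by (rule card_mono[OF finite_keys boundary_subset_keys[OF _ U(1)]])
  qed
  finally show ?thesis .
qed

end
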